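(* Let $M_t=M_{y(t)}$, $y(t)=e^{i\theta(t)}$, $\theta(0)=\theta_0$, be the (ancient) spherical mean curvature flow of isoparametric hypersurfaces in $S^{n+1}$ with $g$ distinct principal curvatures, and let $A(t)$, $H(t)$ be the shape operator and (scalar) mean curvature of $M_t$ in $S^{n+1}$. Then $$\lim_{t\to-\infty}\|A(t)\|^2=(g-1)n.$$ If $M_0$ is not minimal, then $$\lim_{t\to-\infty}H^2(t)\,e^{-2gnt}=C_0,\qquad C_0=\frac{n^2(\cos g\theta_0+\delta)^2}{1-\delta^2}>0.$$
   Context: Let $M^n$ be a compact isoparametric hypersurface in the unit sphere $S^{n+1}\subset\mathbb{R}^{n+2}$ (constant principal curvatures) with $g$ distinct principal curvatures; then $g\in\{1,2,3,4,6\}$. Fix $x_0\in M$ and identify the 2-dimensional normal space $\nu_{x_0}M$ of $M$ in $\mathbb{R}^{n+2}$ with $\mathbb{C}$ so that the two focal submanifolds $M_+$, $M_-$ ($\dim M_+\le\dim M_-$) meet the normal circle at $1$ and $e^{i\pi/g}$ (the intersection points closest to $x_0$). The Weyl chamber is $C=\{re^{i\theta}:r>0,\ 0<\theta<\pi/g\}$. For $k=1,\dots,g$ let $\theta_k=k\pi/g-\pi/2$, $\alpha_k=e^{i\theta_k}$, and $m_k=m_1$ for $k$ odd, $m_k=m_2$ for $k$ even, where $(m_1,m_2)$, $m_1\le m_2$, is the multiplicity data of the principal curvatures; $m_1=m_2$ if $g$ is odd, and $(m_1+m_2)g=2n$. For $x\in C$, $M_x=\{p+\tilde\xi(p):p\in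 M\}$ where $\tilde\xi$ is the parallel normal field on $M$ with $\tilde\xi(x_0)=x-x_0$; it is an $n$-dimensional isoparametric submanifold of $\mathbb{R}^{n+2}$ lying in $S^{n+1}(|x|)$, with normal space $\nu_{x_0}M$ at $x$, and $T_xM_x=\oplus_kE_k$, $\dim E_k=m_k$, with Euclidean shape operator $A_\xi|_{E_k}=\langle\xi,-\alpha_k/\langle x,\alpha_k\rangle\rangle\mathrm{Id}$ ($\langle\cdot,\cdot\rangle$ the real inner product on $\mathbb{C}=\mathbb{R}^2$). $H^E(x),A^E(x)$ denote mean curvature vector and shape operator of $M_x$ at $x$ in $\mathbb{R}^{n+2}$; $H^S(x),A^S(x)$ those of $M_x$ as a hypersurface of $S^{n+1}(|x|)$; $\|A\|^2$ is the sum of squared Hilbert–Schmidt norms over an orthonormal normal basis. Set $\delta=(m_2-m_1)/(m_2+m_1)$ if $g\ge2$ and $\delta=0$ if $g=1$, and let $\theta_{\min}\in(0,\pi/g)$ be defined by $\cos g\theta_{\min}=-\delta$. The spherical MCF of $M_{y(0)}$ is the family $M_{y(t)}$ with $y(t)\in C$ unit and $y'(t)=H^S(y(t))$; it exists for all $t\le 0$. In the claim $A(t)=A^S(y(t))$ and $H^2(t)=\|H^S(y(t))\|^2$. *)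

theory Defs
  imports "HOL-Analysis.Analysis"
begin

text \<open>The normal plane of M at x0 is identified with the complex plane (as a real inner
  product space, inner product = real part of x * cnj y). All geometric quantities of the
  isoparametric submanifold M_x at x are expressed through the given data: the curvature
  normals alpha_k and the multiplicities m_k of the curvature distributions E_k.\<close>

definition iso_admissible :: "nat \<Rightarrow> nat \<Rightarrow> nat \<Rightarrow> nat \<Rightarrow> bool" where
  "iso_admissible g m1 m2 n \<longleftrightarrow> g \<in> {1,2,3,4,6} \<and> 1 \<le> m1 \<and> m1 \<le> m2 \<and>
     (odd g \<longrightarrow> m1 = m2) \<and> (m1 + m2) * g = 2 * n"

definition alpha :: "nat \<Rightarrow> nat \<Rightarrow> complex" where
  "alpha g k = cis (real k * pi / real g - pi / 2)"

definition mult :: "nat \<Rightarrow> nat \<Rightarrow> nat \<Rightarrow> nat" where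
  "mult m1 m2 k = (if odd k then m1 else m2)"

definition weyl_chamber :: "nat \<Rightarrow> complex set" where
  "weyl_chamber g = {complex_of_real r * cis \<theta> | r \<theta>. r > 0 \<and> 0 < \<theta> \<and> \<theta> < pi / real g}"

definition delta :: "nat \<Rightarrow> nat \<Rightarrow> nat \<Rightarrow> real" where
  "delta g m1 m2 = (if g \<ge> 2 then (real m2 - real m1) / (real m2 + real m1) else 0)"

text \<open>Eigenvalue of the Euclidean shape operator A_xi of M_x at x on E_k.\<close>
definition shapeE :: "nat \<Rightarrow> complex \<Rightarrow> complex \<Rightarrow> nat \<Rightarrow> real" where
  "shapeE g x \<xi> k = \<xi> \<bullet> (- alpha g k / complex_of_real (x \<bullet> alpha g k))"

text \<open>Euclidean mean curvature vector H^E(x) (trace of xi |-> A_xi, as a normal vector).\<close>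
definition HE :: "nat \<Rightarrow> nat \<Rightarrow> nat \<Rightarrow> complex \<Rightarrow> complex" where
  "HE g m1 m2 x = (\<Sum>k=1..g. of_nat (mult m1 m2 k) * (- alpha g k / complex_of_real (x \<bullet> alpha g k)))"

text \<open>Spherical mean curvature vector: component of H^E tangent to the sphere S^{n+1}(|x|),
  i.e. orthogonal to the position vector x.\<close>
definition HS :: "nat \<Rightarrow> nat \<Rightarrow> nat \<Rightarrow> complex \<Rightarrow> complex" where
  "HS g m1 m2 x = HE g m1 m2 x - (HE g m1 m2 x \<bullet> sgn x) *\<^sub>R sgn x"

text \<open>Unit normal of M_x in the sphere S^{n+1}(|x|) at x.\<close>
definition nuS :: "complex \<Rightarrow> complex" where
  "nuS x = \<i> * sgn x"

text \<open>Squared norm of the spherical shape operator A^S(x) = A^E_{nuS x}.\<close>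
definition AS_normsq :: "nat \<Rightarrow> nat \<Rightarrow> nat \<Rightarrow> complex \<Rightarrow> real" where
  "AS_normsq g m1 m2 x = (\<Sum>k=1..g. real (mult m1 m2 k) * (shapeE g x (nuS x) k)\<^sup>2)"

end

theory Submission
  imports Defs
begin

(* Write the points of the unit Weyl chamber as x = cis theta with 0 < theta < pi/g. The principal
   curvatures of M_x in the sphere are -cot (theta - k pi/g), k = 1..g, and the classical cotangent
   sums over N equispaced angles (N = g for odd g; N = g/2 for each parity class of k when g is even;
   so N <= 3) give, with c = cos (g theta) and s = sin (g theta),
     H s = - n (c + delta)   and   |A|^2 = g^2/2 (m1/(1 + c) + m2/(1 - c)) - n.
   Along the flow the first identity becomes the linear ODE c' = g n (c + delta), hence
   c + delta = (c(0) + delta) exp (g n t), which tends to 0 as t -> -infinity. Letting c -> -delta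
   gives |A|^2 -> (g - 1) n, and H^2 exp (-2 g n t) = n^2 (c(0) + delta)^2 / (1 - c^2) tends to
   n^2 (c(0) + delta)^2 / (1 - delta^2). *)

lemma sin_treble_sin: "sin (3 * x) = 3 * sin x - 4 * sin x ^ 3" for x :: real
proof -
  have "sin (3 * x) = sin (2 * x + x)" by simp
  also have "\<dots> = 3 * sin x - 4 * sin x ^ 3"
    unfolding sin_add sin_double cos_double_sin using sin_cos_squared_add[of x] by algebra
  finally show ?thesis .
qed

lemma clear_denominators_3:
  fixes p1 p2 p3 d1 d2 d3 a b :: real
  assumes "d1 \<noteq> 0" "d2 \<noteq> 0" "d3 \<noteq> 0"
    and "(p1 * d2 * d3 + p2 * d1 * d3 + p3 * d1 * d2) * a = b * (d1 * d2 * d3)"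
  shows "(p1 / d1 + p2 / d2 + p3 / d3) * a = b"
  using assms by (simp add: field_simps)

lemma cot_sum_equispaced_2:
  fixes u :: real
  assumes "sin u \<noteq> 0" "sin (u - pi / 2) \<noteq> 0"
  shows "(cot (u - pi / 2) + cot (u - pi)) * sin (2 * u) = 2 * cos (2 * u)"
    and "((cot (u - pi / 2))\<^sup>2 + (cot (u - pi))\<^sup>2) * (sin (2 * u))\<^sup>2 = 4 - 2 * (sin (2 * u))\<^sup>2"
proof -
  define a b where "a = cos u" and "b = sin u"
  have ab: "a\<^sup>2 + b\<^sup>2 = 1" by (simp add: a_def b_def)
  have d: "a \<noteq> 0" "b \<noteq> 0" using assms by (simp_all add: a_def b_def sin_diff)
  have cot: "cot (u - pi / 2) = - b / a" "cot (u - pi) = a / b"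
    by (simp_all add: cot_def sin_diff cos_diff a_def b_def)
  have double: "sin (2 * u) = 2 * a * b" "cos (2 * u) = a\<^sup>2 - b\<^sup>2"
    by (simp_all add: a_def b_def sin_double cos_double)
  show "(cot (u - pi / 2) + cot (u - pi)) * sin (2 * u) = 2 * cos (2 * u)"
    unfolding cot double using d by (simp add: field_simps power2_eq_square)
  show "((cot (u - pi / 2))\<^sup>2 + (cot (u - pi))\<^sup>2) * (sin (2 * u))\<^sup>2 = 4 - 2 * (sin (2 * u))\<^sup>2"
    unfolding cot double using d by (simp add: field_simps) (use ab in algebra)
qed

lemma cot_sum_equispaced_3:
  fixes u :: real
  assumes "sin u \<noteq> 0" "sin (u - pi / 3) \<noteq> 0" "sin (u - 2 * pi / 3) \<noteq> 0"
  shows "(cot (u - pi / 3) + cot (u - 2 * pi / 3) + cot (u - pi)) * sin (3 * u) = 3 * cos (3 * u)"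
    and "((cot (u - pi / 3))\<^sup>2 + (cot (u - 2 * pi / 3))\<^sup>2 + (cot (u - pi))\<^sup>2) * (sin (3 * u))\<^sup>2
         = 9 - 3 * (sin (3 * u))\<^sup>2"
proof -
  define a b r where "a = cos u" and "b = sin u" and "r = sqrt 3"
  have ab: "a\<^sup>2 + b\<^sup>2 = 1" and r: "r\<^sup>2 = 3" by (simp_all add: a_def b_def r_def)
  have "sin (2 * pi / 3) = sqrt 3 / 2" "cos (2 * pi / 3) = - 1 / 2"
    using sin_pi_minus[of "pi / 3"] cos_pi_minus[of "pi / 3"] by (simp_all add: sin_60 cos_60 field_simps)
  then have sc: "sin (u - pi / 3) = (b - r * a) / 2" "cos (u - pi / 3) = (a + r * b) / 2"
      "sin (u - 2 * pi / 3) = - (b + r * a) / 2" "cos (u - 2 * pi / 3) = (r * b - a) / 2"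
    unfolding sin_diff cos_diff a_def b_def r_def by (simp_all add: sin_60 cos_60 field_simps)
  have d: "b - r * a \<noteq> 0" "b + r * a \<noteq> 0" "b \<noteq> 0" using assms unfolding sc b_def by auto
  have cot: "cot (u - pi / 3) = (a + r * b) / (b - r * a)" "cot (u - 2 * pi / 3) = (a - r * b) / (b + r * a)"
      "cot (u - pi) = a / b"
    unfolding cot_def sc using d by (simp_all add: field_simps a_def b_def)
  have treble: "sin (3 * u) = 3 * b - 4 * b ^ 3" "cos (3 * u) = 4 * a ^ 3 - 3 * a"
    by (simp_all add: a_def b_def sin_treble_sin cos_treble_cos)
  show "(cot (u - pi / 3) + cot (u - 2 * pi / 3) + cot (u - pi)) * sin (3 * u) = 3 * cos (3 * u)"
    unfolding cot treble using d by (rule clear_denominators_3) (use ab r in algebra)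
  show "((cot (u - pi / 3))\<^sup>2 + (cot (u - 2 * pi / 3))\<^sup>2 + (cot (u - pi))\<^sup>2) * (sin (3 * u))\<^sup>2
         = 9 - 3 * (sin (3 * u))\<^sup>2"
    unfolding cot treble power_divide using d
    by (intro clear_denominators_3) (simp_all, use ab r in algebra)
qed

lemma sin_equispaced_neg:
  fixes u :: real and N j :: nat
  assumes "0 < u" "u < pi / real N" "1 \<le> j" "j \<le> N"
  shows "sin (u - real j * pi / real N) < 0"
proof -
  have N: "0 < real N" using assms(3,4) by simp
  have "1 * pi / real N \<le> real j * pi / real N" "real j * pi / real N \<le> real N * pi / real N"
    using assms(3,4) N by (intro divide_right_mono mult_right_mono; simp)+
  then have "0 < real j * pi / real N - u" "real j * pi / real N - u < pi"
    using assms(1,2) N by simp_all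
  then have "0 < sin (real j * pi / real N - u)" by (rule sin_gt_zero)
  then show ?thesis by (metis minus_diff_eq neg_less_0_iff_less sin_minus)
qed

lemma cot_sum_equispaced:
  fixes N :: nat and u :: real
  assumes "N \<in> {1, 2, 3}" "0 < u" "u < pi / real N"
  shows "(\<Sum>j=1..N. cot (u - real j * pi / real N)) * sin (real N * u) = real N * cos (real N * u)"
      (is ?sum)
    and "(\<Sum>j=1..N. (cot (u - real j * pi / real N))\<^sup>2) * (sin (real N * u))\<^sup>2
         = (real N)\<^sup>2 - real N * (sin (real N * u))\<^sup>2" (is ?sum_sq)
proof -
  have nz: "sin (u - real j * pi / real N) \<noteq> 0" if "1 \<le> j" "j \<le> N" for j
    using sin_equispaced_neg[OF assms(2,3) that] by simp
  consider "N = 1" | "N = 2" | "N = 3" using assms(1) by auto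
  then have "?sum \<and> ?sum_sq"
  proof cases
    case 1
    then show ?thesis using nz[of 1] by (simp add: cot_def power_divide cos_squared_eq)
  next
    case 2
    then show ?thesis using cot_sum_equispaced_2 nz[of 1] nz[of 2] by (simp add: numeral_2_eq_2)
  next
    case 3
    then show ?thesis using cot_sum_equispaced_3 nz[of 1] nz[of 2] nz[of 3] by (simp add: numeral_3_eq_3)
  qed
  then show ?sum ?sum_sq by simp_all
qed

lemma sum_split_odd_even:
  fixes f :: "nat \<Rightarrow> 'a::comm_monoid_add"
  shows "(\<Sum>k=1..2*N. f k) = (\<Sum>j=1..N. f (2 * j - 1)) + (\<Sum>j=1..N. f (2 * j))"
proof (induction N)
  case (Suc N)
  have "{1..2 * Suc N} = insert (2 * N + 2) (insert (2 * N + 1) {1..2 * N})" by auto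
  then show ?case using Suc by (simp add: algebra_simps)
qed simp

(* The odd-indexed angles are the N equispaced angles below theta + pi/(2N), the even-indexed ones
   those below theta. *)
lemma weighted_cot_sums_even:
  fixes N m1 m2 :: nat and \<theta> :: real
  assumes N: "N \<in> {1, 2, 3}" and \<theta>: "0 < \<theta>" "\<theta> < pi / (2 * real N)"
  defines "c \<equiv> cos (2 * real N * \<theta>)"
  shows "(\<Sum>k=1..2*N. real (mult m1 m2 k) * cot (\<theta> - real k * pi / (2 * real N))) * sin (2 * real N * \<theta>)
      = real N * (real m2 * (1 + c) - real m1 * (1 - c))"
    and "(\<Sum>k=1..2*N. real (mult m1 m2 k) * (cot (\<theta> - real k * pi / (2 * real N)))\<^sup>2)
      = real m1 * (2 * (real N)\<^sup>2 / (1 + c) - real N) + real m2 * (2 * (real N)\<^sup>2 / (1 - c) - real N)"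
proof -
  define \<phi> where "\<phi> = real N * \<theta>"
  define u where "u = \<theta> + pi / (2 * real N)"
  have Npos: "0 < real N" using N by auto
  have half: "pi / (2 * real N) < pi / real N" using Npos by (simp add: field_simps)
  have u: "0 < u" "u < pi / real N" and \<theta>': "\<theta> < pi / real N"
    using \<theta> Npos half by (simp_all add: u_def)
  have \<phi>: "0 < \<phi>" "\<phi> < pi / 2" using \<theta> Npos by (simp_all add: \<phi>_def field_simps)
  have odd_arg: "\<theta> - (2 * real j - 1) * pi / (2 * real N) = u - real j * pi / real N" for j
    using Npos by (simp add: u_def field_simps)
  have even_arg: "\<theta> - real (2 * j) * pi / (2 * real N) = \<theta> - real j * pi / real N" for j
    using Npos by (simp add: field_simps)
  have Nu: "real N * u = \<phi> + pi / 2" using Npos by (simp add: u_def \<phi>_def field_simps)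
  have c: "1 + c = 2 * (cos \<phi>)\<^sup>2" "1 - c = 2 * (sin \<phi>)\<^sup>2" "sin (2 * real N * \<theta>) = 2 * sin \<phi> * cos \<phi>"
    by (simp_all add: c_def \<phi>_def cos_double_cos sin_squared_eq sin_double mult.assoc)
  define A where "A = (\<Sum>j=1..N. cot (u - real j * pi / real N))"
  define B where "B = (\<Sum>j=1..N. cot (\<theta> - real j * pi / real N))"
  define A2 where "A2 = (\<Sum>j=1..N. (cot (u - real j * pi / real N))\<^sup>2)"
  define B2 where "B2 = (\<Sum>j=1..N. (cot (\<theta> - real j * pi / real N))\<^sup>2)"
  have AB: "A * cos \<phi> = - real N * sin \<phi>" "B * sin \<phi> = real N * cos \<phi>"
      "A2 * (cos \<phi>)\<^sup>2 = (real N)\<^sup>2 - real N * (cos \<phi>)\<^sup>2" "B2 * (sin \<phi>)\<^sup>2 = (real N)\<^sup>2 - real N * (sin \<phi>)\<^sup>2"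
    using cot_sum_equispaced[OF N u] cot_sum_equispaced[OF N \<theta>(1) \<theta>']
    unfolding A_def B_def A2_def B2_def Nu \<phi>_def[symmetric] by (simp_all add: cos_add sin_add)
  have split: "(\<Sum>k=1..2*N. real (mult m1 m2 k) * f (\<theta> - real k * pi / (2 * real N)))
      = real m1 * (\<Sum>j=1..N. f (u - real j * pi / real N)) + real m2 * (\<Sum>j=1..N. f (\<theta> - real j * pi / real N))"
    for f :: "real \<Rightarrow> real"
    unfolding sum_split_odd_even sum_distrib_left
    by (intro arg_cong2[where f = "(+)"] sum.cong) (auto simp: mult_def odd_arg even_arg)
  have cs: "cos \<phi> > 0" "sin \<phi> > 0" using \<phi> by (simp_all add: cos_gt_zero sin_gt_zero)
  show "(\<Sum>k=1..2*N. real (mult m1 m2 k) * cot (\<theta> - real k * pi / (2 * real N))) * sin (2 * real N * \<theta>)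
      = real N * (real m2 * (1 + c) - real m1 * (1 - c))"
  proof -
    have "(real m1 * A + real m2 * B) * (2 * sin \<phi> * cos \<phi>)
        = 2 * real m1 * sin \<phi> * (A * cos \<phi>) + 2 * real m2 * cos \<phi> * (B * sin \<phi>)"
      by (simp add: algebra_simps)
    also have "\<dots> = real N * (real m2 * (2 * (cos \<phi>)\<^sup>2) - real m1 * (2 * (sin \<phi>)\<^sup>2))"
      unfolding AB by (simp add: algebra_simps power2_eq_square)
    finally show ?thesis unfolding split[of cot] A_def[symmetric] B_def[symmetric] c .
  qed
  show "(\<Sum>k=1..2*N. real (mult m1 m2 k) * (cot (\<theta> - real k * pi / (2 * real N)))\<^sup>2)
      = real m1 * (2 * (real N)\<^sup>2 / (1 + c) - real N) + real m2 * (2 * (real N)\<^sup>2 / (1 - c) - real N)"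
  proof -
    have "A2 = 2 * (real N)\<^sup>2 / (1 + c) - real N" "B2 = 2 * (real N)\<^sup>2 / (1 - c) - real N"
      unfolding c using AB(3,4) cs by (simp_all add: field_simps)
    then show ?thesis
      unfolding split[of "\<lambda>x. (cot x)\<^sup>2"] A2_def[symmetric] B2_def[symmetric] by simp
  qed
qed

lemma inner_cis: "cis a \<bullet> cis b = cos (a - b)"
  by (simp add: inner_complex_def cos_diff)

lemma shapeE_eq: "shapeE g x \<xi> k = - (\<xi> \<bullet> alpha g k) / (x \<bullet> alpha g k)"
proof -
  have "- alpha g k / complex_of_real (x \<bullet> alpha g k) = (- 1 / (x \<bullet> alpha g k)) *\<^sub>R alpha g k"
    by (simp add: scaleR_conv_of_real divide_inverse mult.commute)
  then show ?thesis
    unfolding shapeE_def by simp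
qed

lemma shapeE_nuS_cis: "shapeE g (cis \<theta>) (nuS (cis \<theta>)) k = - cot (\<theta> - real k * pi / real g)"
proof -
  define \<psi> where "\<psi> = real k * pi / real g - pi / 2"
  have "nuS (cis \<theta>) = cis (\<theta> + pi / 2)"
    by (simp add: nuS_def sgn_div_norm cis_mult[symmetric] flip: cis_pi_half)
  then have "shapeE g (cis \<theta>) (nuS (cis \<theta>)) k = - cos (\<theta> + pi / 2 - \<psi>) / cos (\<theta> - \<psi>)"
    by (simp add: shapeE_eq alpha_def inner_cis flip: \<psi>_def)
  also have "\<dots> = - cot (\<theta> - real k * pi / real g)"
  proof -
    have "\<theta> + pi / 2 - \<psi> = (\<theta> - real k * pi / real g) + pi"
      and "\<theta> - \<psi> = (\<theta> - real k * pi / real g) + pi / 2"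
      by (simp_all add: \<psi>_def)
    then show ?thesis by (simp only:) (simp add: cot_def cos_add)
  qed
  finally show ?thesis .
qed

lemma inner_HE_trace: "HE g m1 m2 x \<bullet> \<xi> = (\<Sum>k=1..g. real (mult m1 m2 k) * shapeE g x \<xi> k)"
proof -
  have "(of_nat m * z) \<bullet> \<xi> = real m * (\<xi> \<bullet> z)" for m and z :: complex
    by (metis inner_commute inner_scaleR_left of_real_of_nat_eq scaleR_conv_of_real)
  then show ?thesis
    unfolding HE_def shapeE_def inner_sum_left by presburger
qed

lemma HS_unit:
  assumes "norm x = 1"
  shows "HS g m1 m2 x = (HE g m1 m2 x \<bullet> nuS x) *\<^sub>R nuS x"
proof -
  have "(Re x)\<^sup>2 + (Im x)\<^sup>2 = 1" using assms cmod_power2[of x] by simp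
  then show ?thesis
    unfolding HS_def nuS_def using assms
    by (simp add: sgn_div_norm complex_eq_iff inner_complex_def algebra_simps power2_eq_square) algebra
qed

lemma weyl_chamber_unit:
  assumes "x \<in> weyl_chamber g" "norm x = 1"
  obtains \<theta> where "x = cis \<theta>" "0 < \<theta>" "\<theta> < pi / real g"
proof -
  obtain r \<theta> where x: "x = complex_of_real r * cis \<theta>" "r > 0" "0 < \<theta>" "\<theta> < pi / real g"
    using assms(1) unfolding weyl_chamber_def by blast
  then have "r = 1" using assms(2) by (simp add: norm_mult)
  then show ?thesis using that x by simp
qed

lemma iso_admissible_pos:
  assumes "iso_admissible g m1 m2 n"
  shows "0 < g" "0 < n"
proof -
  have g: "g \<noteq> 0" and m1: "m1 \<noteq> 0" and n: "(m1 + m2) * g = 2 * n"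
    using assms by (auto simp: iso_admissible_def)
  have "(m1 + m2) * g \<noteq> 0" using g m1 by simp
  then show "0 < g" "0 < n" using g unfolding n by simp_all
qed

lemma sin_mult_chamber_pos:
  assumes "0 < \<theta>" "\<theta> < pi / real g"
  shows "0 < sin (real g * \<theta>)"
proof -
  have "0 < real g" using assms by (cases "g = 0") auto
  then show ?thesis using assms by (intro sin_gt_zero) (simp_all add: field_simps)
qed

lemma weighted_cot_sums_chamber:
  fixes g m1 m2 n :: nat and \<theta> :: real
  assumes adm: "iso_admissible g m1 m2 n" and \<theta>: "0 < \<theta>" "\<theta> < pi / real g"
  defines "c \<equiv> cos (real g * \<theta>)"
  shows "(\<Sum>k=1..g. real (mult m1 m2 k) * cot (\<theta> - real k * pi / real g)) * sin (real g * \<theta>)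
      = real n * (c + delta g m1 m2)" (is ?sum)
    and "(\<Sum>k=1..g. real (mult m1 m2 k) * (cot (\<theta> - real k * pi / real g))\<^sup>2)
      = (real g)\<^sup>2 / 2 * (real m1 / (1 + c) + real m2 / (1 - c)) - real n" (is ?sum_sq)
proof -
  have g: "g \<in> {1, 2, 3, 4, 6}" and m1: "1 \<le> m1" and n: "(m1 + m2) * g = 2 * n"
    and odd: "odd g \<Longrightarrow> m1 = m2"
    using adm by (auto simp: iso_admissible_def)
  have s: "sin (real g * \<theta>) > 0"
    using \<theta> by (rule sin_mult_chamber_pos)
  have "(sin (real g * \<theta>))\<^sup>2 = (1 + c) * (1 - c)"
    by (simp add: c_def sin_squared_eq algebra_simps power2_eq_square)
  with s have s2: "(sin (real g * \<theta>))\<^sup>2 = (1 + c) * (1 - c)" "1 + c \<noteq> 0" "1 - c \<noteq> 0"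
    by auto
  consider "g \<in> {1, 3}" | N where "N \<in> {1, 2, 3}" "g = 2 * N"
    using g by force
  then have "?sum \<and> ?sum_sq"
  proof cases
    case 1
    then have m: "m2 = m1" "delta g m1 m1 = 0" "real n = real g * real m1"
      and weights: "(\<Sum>k=1..g. real (mult m1 m2 k) * f k) = real m1 * (\<Sum>k=1..g. f k)" for f
      using odd n by (auto simp: delta_def mult_def sum_distrib_left)
    have "g \<in> {1, 2, 3}" using 1 by auto
    note sums = cot_sum_equispaced[OF this \<theta>]
    have "(\<Sum>k=1..g. (cot (\<theta> - real k * pi / real g))\<^sup>2) = (real g)\<^sup>2 / (sin (real g * \<theta>))\<^sup>2 - real g"
      using sums(2) s by (simp add: field_simps)
    then have sum_sq: "(\<Sum>k=1..g. (cot (\<theta> - real k * pi / real g))\<^sup>2) = (real g)\<^sup>2 / ((1 + c) * (1 - c)) - real g"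
      by (simp only: s2(1))
    have frac: "real m1 / (1 + c) + real m2 / (1 - c) = 2 * real m1 / ((1 + c) * (1 - c))"
      using s2(2,3) m(1) by (simp add: field_simps)
    have ?sum
      unfolding weights using sums(1) by (simp add: m c_def mult.assoc)
    moreover have ?sum_sq
      unfolding weights sum_sq frac m(3) by (simp add: algebra_simps)
    ultimately show ?thesis ..
  next
    case 2
    then have "real n = real N * (real m1 + real m2)" "real g = 2 * real N"
      "delta g m1 m2 = (real m2 - real m1) / (real m2 + real m1)"
      using n by (auto simp: delta_def)
    moreover note weighted_cot_sums_even[OF 2(1), of \<theta> m1 m2] 2 \<theta> m1
    ultimately show ?thesis
      by (simp add: c_def) (simp add: field_simps)
  qed
  then show ?sum ?sum_sq by simp_all
qed

lemma Im_power_unit_chamber_pos: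
  assumes "x \<in> weyl_chamber g" "norm x = 1"
  shows "0 < Im (x ^ g)"
proof -
  obtain \<theta> where "x = cis \<theta>" "0 < \<theta>" "\<theta> < pi / real g" using assms by (rule weyl_chamber_unit)
  then show ?thesis by (simp add: Complex.DeMoivre sin_mult_chamber_pos)
qed

lemma mean_curvature_unit_chamber:
  assumes adm: "iso_admissible g m1 m2 n" and x: "x \<in> weyl_chamber g" "norm x = 1"
  shows "(HE g m1 m2 x \<bullet> nuS x) * Im (x ^ g) = - real n * (Re (x ^ g) + delta g m1 m2)"
proof -
  obtain \<theta> where \<theta>: "x = cis \<theta>" "0 < \<theta>" "\<theta> < pi / real g" using x by (rule weyl_chamber_unit)
  show ?thesis
    using weighted_cot_sums_chamber(1)[OF adm \<theta>(2,3)]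
    unfolding \<theta>(1) Complex.DeMoivre by (simp add: inner_HE_trace shapeE_nuS_cis sum_negf)
qed

lemma AS_normsq_unit_chamber:
  assumes adm: "iso_admissible g m1 m2 n" and x: "x \<in> weyl_chamber g" "norm x = 1"
  shows "AS_normsq g m1 m2 x
    = (real g)\<^sup>2 / 2 * (real m1 / (1 + Re (x ^ g)) + real m2 / (1 - Re (x ^ g))) - real n"
proof -
  obtain \<theta> where \<theta>: "x = cis \<theta>" "0 < \<theta>" "\<theta> < pi / real g" using x by (rule weyl_chamber_unit)
  show ?thesis
    using weighted_cot_sums_chamber(2)[OF adm \<theta>(2,3)]
    unfolding \<theta>(1) Complex.DeMoivre by (simp add: AS_normsq_def shapeE_nuS_cis)
qed

lemma HS_eq_0_iff_unit_chamber:
  assumes adm: "iso_admissible g m1 m2 n" and x: "x \<in> weyl_chamber g" "norm x = 1"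
  shows "HS g m1 m2 x = 0 \<longleftrightarrow> Re (x ^ g) + delta g m1 m2 = 0"
proof -
  have "0 < n" using iso_admissible_pos[OF adm] by simp
  moreover have "nuS x \<noteq> 0" using x(2) by (auto simp: nuS_def sgn_zero_iff)
  ultimately show ?thesis
    using mean_curvature_unit_chamber[OF adm x] Im_power_unit_chamber_pos[OF x]
    by (auto simp: HS_unit[OF x(2)])
qed

lemma delta_bounds:
  assumes "iso_admissible g m1 m2 n"
  shows "0 \<le> delta g m1 m2" "delta g m1 m2 < 1" "(delta g m1 m2)\<^sup>2 < 1"
proof -
  show "0 \<le> delta g m1 m2" "delta g m1 m2 < 1"
    using assms by (auto simp: iso_admissible_def delta_def divide_simps)
  then show "(delta g m1 m2)\<^sup>2 < 1" by (simp add: abs_square_less_1)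
qed

lemma AS_normsq_minimal_value:
  assumes adm: "iso_admissible g m1 m2 n"
  shows "(real g)\<^sup>2 / 2 * (real m1 / (1 - delta g m1 m2) + real m2 / (1 + delta g m1 m2)) - real n
    = real ((g - 1) * n)"
proof -
  have g: "1 \<le> g" and m: "1 \<le> m1" "1 \<le> m2" and n: "(real m1 + real m2) * real g = 2 * real n"
    and g1: "g = 1 \<Longrightarrow> m1 = m2"
    using adm unfolding iso_admissible_def by (auto simp flip: of_nat_add of_nat_mult)
  have sum: "real m1 / (1 - delta g m1 m2) + real m2 / (1 + delta g m1 m2) = real m1 + real m2"
  proof (cases "g = 1")
    case False
    then have "delta g m1 m2 = (real m2 - real m1) / (real m2 + real m1)"
      using g by (simp add: delta_def)
    then have "1 - delta g m1 m2 = 2 * real m1 / (real m1 + real m2)"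
      and "1 + delta g m1 m2 = 2 * real m2 / (real m1 + real m2)"
      using m by (simp_all add: field_simps)
    then show ?thesis using m by (simp only:) (simp add: field_simps)
  qed (use g1 in \<open>simp add: delta_def\<close>)
  have "(real g)\<^sup>2 / 2 * (real m1 + real m2) = real g * ((real m1 + real m2) * real g) / 2"
    by (simp add: power2_eq_square)
  then have "(real g)\<^sup>2 / 2 * (real m1 + real m2) = real g * real n"
    by (simp add: n)
  then show ?thesis
    unfolding sum using g by (simp add: of_nat_diff algebra_simps)
qed

lemma linear_ode_solution:
  fixes f :: "real \<Rightarrow> real"
  assumes S: "convex S" "t0 \<in> S" "t \<in> S"
    and deriv: "\<And>t. t \<in> S \<Longrightarrow> (f has_real_derivative K * f t) (at t within S)"
  shows "f t = f t0 * exp (K * (t - t0))"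
proof -
  have "((\<lambda>t. f t * exp (- (K * t))) has_real_derivative 0) (at t within S)" if "t \<in> S" for t
    by (auto intro!: derivative_eq_intros deriv[OF that] simp: algebra_simps)
  then obtain C where C: "\<And>t. t \<in> S \<Longrightarrow> f t * exp (- (K * t)) = C"
    using has_field_derivative_zero_constant[OF S(1), of "\<lambda>t. f t * exp (- (K * t))"] by blast
  have "f t = C * exp (K * t)" "f t0 = C * exp (K * t0)"
    using C[OF S(3)] C[OF S(2)] by (auto simp: exp_minus field_simps)
  moreover have "exp (K * t) = exp (K * t0) * exp (K * (t - t0))"
    by (simp add: algebra_simps flip: exp_add)
  ultimately show ?thesis by simp
qed

lemma tendsto_exp_mult_at_bot:
  fixes K :: real
  assumes "0 < K"
  shows "((\<lambda>t. exp (K * t)) \<longlongrightarrow> 0) at_bot"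
proof -
  have "filterlim (\<lambda>t. K * t) at_bot at_bot"
    using filterlim_tendsto_pos_mult_at_bot[OF tendsto_const assms filterlim_ident] .
  then show ?thesis using filterlim_compose[OF exp_at_bot] by blast
qed

locale spherical_isoparametric_MCF =
  fixes g m1 m2 n :: nat and y :: "real \<Rightarrow> complex"
  assumes adm: "iso_admissible g m1 m2 n"
    and chamber: "\<And>t. t \<le> 0 \<Longrightarrow> y t \<in> weyl_chamber g \<and> norm (y t) = 1"
    and flow: "\<And>t. t \<le> 0 \<Longrightarrow> (y has_vector_derivative HS g m1 m2 (y t)) (at t within {..0})"
begin

lemma Re_power_has_derivative:
  assumes t: "t \<le> 0"
  shows "((\<lambda>t. Re (y t ^ g)) has_real_derivative real g * real n * (Re (y t ^ g) + delta g m1 m2))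
    (at t within {..0})"
proof -
  define h where "h = HE g m1 m2 (y t) \<bullet> nuS (y t)"
  have x: "y t \<in> weyl_chamber g" "norm (y t) = 1" using chamber[OF t] by auto
  have g: "0 < g" using iso_admissible_pos[OF adm] by simp
  have HS: "HS g m1 m2 (y t) = h *\<^sub>R (\<i> * y t)"
    unfolding h_def HS_unit[OF x(2)] using x(2) by (simp add: nuS_def sgn_div_norm)
  have "((\<lambda>z. z ^ g) has_field_derivative of_nat g * y t ^ (g - 1)) (at (y t) within y ` {..0})"
    by (auto intro!: derivative_eq_intros)
  from field_vector_diff_chain_within[OF flow[OF t] this]
  have "((\<lambda>t. y t ^ g) has_vector_derivative HS g m1 m2 (y t) * (of_nat g * y t ^ (g - 1)))
      (at t within {..0})"
    by (simp add: o_def)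
  also have "HS g m1 m2 (y t) * (of_nat g * y t ^ (g - 1)) = of_real (real g * h) * (\<i> * y t ^ g)"
  proof -
    have "y t * y t ^ (g - 1) = y t ^ g" using g by (simp flip: power_Suc)
    then show ?thesis unfolding HS by (simp add: scaleR_conv_of_real algebra_simps)
  qed
  finally have "((\<lambda>t. Re (y t ^ g)) has_real_derivative Re (of_real (real g * h) * (\<i> * y t ^ g)))
      (at t within {..0})"
    by (rule has_field_derivative_Re)
  moreover have "Re (of_real (real g * h) * (\<i> * y t ^ g)) = - real g * (h * Im (y t ^ g))"
    by simp
  ultimately show ?thesis
    using mean_curvature_unit_chamber[OF adm x] by (simp add: h_def mult.assoc)
qed

lemma Re_power_flow:
  assumes t: "t \<le> 0"
  shows "Re (y t ^ g) + delta g m1 m2 = (Re (y 0 ^ g) + delta g m1 m2) * exp (real g * real n * t)"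
proof -
  let ?f = "\<lambda>t. Re (y t ^ g) + delta g m1 m2"
  have "(?f has_real_derivative real g * real n * ?f s) (at s within {..0})" if "s \<in> {..0}" for s
  proof -
    have "s \<le> 0" using that by simp
    from DERIV_add[OF Re_power_has_derivative[OF this] DERIV_const[of "delta g m1 m2"]]
    show ?thesis by simp
  qed
  from linear_ode_solution[of "{..0}" 0 t ?f, OF _ _ _ this] t show ?thesis by simp
qed

lemma Re_power_tendsto: "((\<lambda>t. Re (y t ^ g)) \<longlongrightarrow> - delta g m1 m2) at_bot"
proof -
  define w0 where "w0 = Re (y 0 ^ g) + delta g m1 m2"
  have "((\<lambda>t. w0 * exp (real g * real n * t) - delta g m1 m2) \<longlongrightarrow> w0 * 0 - delta g m1 m2) at_bot"
    using iso_admissible_pos[OF adm] by (intro tendsto_intros tendsto_exp_mult_at_bot) simp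
  moreover have "\<forall>\<^sub>F t in at_bot. w0 * exp (real g * real n * t) - delta g m1 m2 = Re (y t ^ g)"
    using eventually_le_at_bot[of 0]
  proof eventually_elim
    case (elim t)
    show ?case using Re_power_flow[OF elim] unfolding w0_def by linarith
  qed
  ultimately show ?thesis using tendsto_cong by fastforce
qed

lemma AS_normsq_tendsto: "((\<lambda>t. AS_normsq g m1 m2 (y t)) \<longlongrightarrow> real ((g - 1) * n)) at_bot"
proof -
  have "1 + - delta g m1 m2 \<noteq> 0" "1 - - delta g m1 m2 \<noteq> 0"
    using delta_bounds(1,2)[OF adm] by auto
  then have "((\<lambda>t. (real g)\<^sup>2 / 2 * (real m1 / (1 + Re (y t ^ g)) + real m2 / (1 - Re (y t ^ g))) - real n)
      \<longlongrightarrow> (real g)\<^sup>2 / 2 * (real m1 / (1 + - delta g m1 m2) + real m2 / (1 - - delta g m1 m2)) - real n) at_bot"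
    by (intro tendsto_intros Re_power_tendsto)
  moreover have "\<forall>\<^sub>F t in at_bot. AS_normsq g m1 m2 (y t)
      = (real g)\<^sup>2 / 2 * (real m1 / (1 + Re (y t ^ g)) + real m2 / (1 - Re (y t ^ g))) - real n"
    using eventually_le_at_bot[of 0] by eventually_elim (use chamber AS_normsq_unit_chamber[OF adm] in blast)
  ultimately show ?thesis
    using AS_normsq_minimal_value[OF adm] tendsto_cong by fastforce
qed

lemma HS_normsq_flow:
  assumes t: "t \<le> 0"
  shows "(norm (HS g m1 m2 (y t)))\<^sup>2 * exp (- 2 * real g * real n * t)
    = (real n)\<^sup>2 * (Re (y 0 ^ g) + delta g m1 m2)\<^sup>2 / (1 - (Re (y t ^ g))\<^sup>2)"
proof -
  define h where "h = HE g m1 m2 (y t) \<bullet> nuS (y t)"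
  define e where "e = exp (- 2 * real g * real n * t)"
  have x: "y t \<in> weyl_chamber g" "norm (y t) = 1" using chamber[OF t] by auto
  have "(norm (HS g m1 m2 (y t)))\<^sup>2 = h\<^sup>2"
    using x(2) by (simp add: HS_unit h_def nuS_def norm_mult sgn_div_norm)
  also have "h = - (real n * (Re (y t ^ g) + delta g m1 m2)) / Im (y t ^ g)"
    using mean_curvature_unit_chamber[OF adm x] Im_power_unit_chamber_pos[OF x]
    by (simp add: h_def field_simps)
  finally have "(norm (HS g m1 m2 (y t)))\<^sup>2 * e
      = (real n * (Re (y 0 ^ g) + delta g m1 m2))\<^sup>2 * ((exp (real g * real n * t))\<^sup>2 * e) / (Im (y t ^ g))\<^sup>2"
    unfolding Re_power_flow[OF t] by (simp add: power_divide power_mult_distrib)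
  moreover have "(exp (real g * real n * t))\<^sup>2 * e = 1"
    by (simp add: e_def power2_eq_square flip: exp_add)
  moreover have "(Im (y t ^ g))\<^sup>2 = 1 - (Re (y t ^ g))\<^sup>2"
    using cmod_power2[of "y t ^ g"] x(2) by (simp add: norm_power)
  ultimately show ?thesis
    by (simp add: e_def power_mult_distrib)
qed

lemma HS_normsq_tendsto:
  "((\<lambda>t. (norm (HS g m1 m2 (y t)))\<^sup>2 * exp (- 2 * real g * real n * t))
    \<longlongrightarrow> (real n)\<^sup>2 * (Re (y 0 ^ g) + delta g m1 m2)\<^sup>2 / (1 - (delta g m1 m2)\<^sup>2)) at_bot"
proof -
  have "1 - (- delta g m1 m2)\<^sup>2 \<noteq> 0"
    using delta_bounds(3)[OF adm] by simp
  then have "((\<lambda>t. (real n)\<^sup>2 * (Re (y 0 ^ g) + delta g m1 m2)\<^sup>2 / (1 - (Re (y t ^ g))\<^sup>2))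
      \<longlongrightarrow> (real n)\<^sup>2 * (Re (y 0 ^ g) + delta g m1 m2)\<^sup>2 / (1 - (- delta g m1 m2)\<^sup>2)) at_bot"
    by (intro tendsto_intros Re_power_tendsto)
  moreover have "\<forall>\<^sub>F t in at_bot. (norm (HS g m1 m2 (y t)))\<^sup>2 * exp (- 2 * real g * real n * t)
      = (real n)\<^sup>2 * (Re (y 0 ^ g) + delta g m1 m2)\<^sup>2 / (1 - (Re (y t ^ g))\<^sup>2)"
    using eventually_le_at_bot[of 0] by eventually_elim (rule HS_normsq_flow)
  ultimately show ?thesis using tendsto_cong by fastforce
qed

end

theorem theorem4p14:
  fixes g m1 m2 n :: nat and y :: "real \<Rightarrow> complex" and \<theta>0 :: real
  assumes adm: "iso_admissible g m1 m2 n"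
    and chamber: "\<And>t. t \<le> 0 \<Longrightarrow> y t \<in> weyl_chamber g \<and> norm (y t) = 1"
    and flow: "\<And>t. t \<le> 0 \<Longrightarrow> (y has_vector_derivative HS g m1 m2 (y t)) (at t within {..0})"
    and init: "y 0 = cis \<theta>0" "0 < \<theta>0" "\<theta>0 < pi / real g"
  shows "((\<lambda>t. AS_normsq g m1 m2 (y t)) \<longlongrightarrow> real ((g - 1) * n)) at_bot \<and>
    (HS g m1 m2 (y 0) \<noteq> 0 \<longrightarrow>
      (let C0 = (real n)\<^sup>2 * (cos (real g * \<theta>0) + delta g m1 m2)\<^sup>2 / (1 - (delta g m1 m2)\<^sup>2)
       in ((\<lambda>t. (norm (HS g m1 m2 (y t)))\<^sup>2 * exp (- 2 * real g * real n * t)) \<longlongrightarrow> C0) at_bot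
          \<and> C0 > 0))"
proof -
  interpret spherical_isoparametric_MCF g m1 m2 n y
    using adm chamber flow by unfold_locales
  have y0: "Re (y 0 ^ g) = cos (real g * \<theta>0)"
    using init(1) by (simp add: Complex.DeMoivre)
  have "(real n)\<^sup>2 * (cos (real g * \<theta>0) + delta g m1 m2)\<^sup>2 / (1 - (delta g m1 m2)\<^sup>2) > 0"
    if "HS g m1 m2 (y 0) \<noteq> 0"
  proof -
    have "cos (real g * \<theta>0) + delta g m1 m2 \<noteq> 0"
      using that HS_eq_0_iff_unit_chamber[OF adm] chamber[of 0] y0 by simp
    then show ?thesis
      using iso_admissible_pos(2)[OF adm] delta_bounds(3)[OF adm] by simp
  qed
  then show ?thesis
    using AS_normsq_tendsto HS_normsq_tendsto by (simp add: Let_def y0)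
qed

end
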